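(* Let $\beta>0$, $\nu>-1$, $\kappa>0$, $\gamma=\beta/(\nu+2)$, $\eta_\infty>0$, and let $s\in\mathbb{R}$ satisfy $$\frac{\beta(\nu+1)}{2(\nu+2)\,\eta_\infty^{\nu+3}}<s^2<\frac{\beta}{\eta_\infty^{\nu+3}}.$$ Then there exists a non-constant smooth solution $(w_s(z),\eta_s(z))$, $z\in\mathbb{R}$, with $\eta_s>0$, of the system $$s\,w_s+\eta_\infty^{-(\nu+2)}-\eta_s^{-(\nu+2)}=0,\qquad \gamma w_s-\kappa w_s''+s(\eta_s-\eta_\infty)=0,$$ satisfying $\lim_{|z|\to\infty}\eta_s(z)=\eta_\infty$ and $\lim_{|z|\to\infty}w_s(z)=0$. Moreover $\eta_s(z)>\eta_\infty$ for all $z$, i.e. in the phase plane $(\eta_s,\eta_s')$ this solution is a homoclinic loop to the saddle point $(\eta_\infty,0)$ lying to the right of it.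
   Context: These equations describe traveling waves $w=w_s(x-st)$, $\eta=\eta_s(x-st)$ of the system $w_t=-\partial_x(\eta^{-(\nu+2)})$, $\eta_t=(\gamma-\kappa\partial_x^2)w_x$. Eliminating $w_s$ via the first equation gives a second-order ODE for $\eta_s$. *)

theory Defs
  imports "HOL-Analysis.Analysis"
begin

definition smooth_deriv_seq :: "(real \<Rightarrow> real) \<Rightarrow> (nat \<Rightarrow> real \<Rightarrow> real) \<Rightarrow> bool" where
  "smooth_deriv_seq f D \<longleftrightarrow> D 0 = f \<and> (\<forall>n x. (D n has_real_derivative D (Suc n) x) (at x))"

definition smooth_real :: "(real \<Rightarrow> real) \<Rightarrow> bool" where
  "smooth_real f \<longleftrightarrow> (\<exists>D. smooth_deriv_seq f D)"

end

(*
  With u = s w = \<eta>\<^sup>-\<^sup>p - \<eta>inf\<^sup>-\<^sup>p (p = \<nu> + 2), the profile equations reduce to the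
  Newtonian equation u'' = f u with f convex on the physical range u > -\<eta>inf\<^sup>-\<^sup>p. The
  upper bound on s\<^sup>2 makes u = 0 a saddle (f' 0 > 0); the lower bound makes the potential
  F (with F' = f, F 0 = 0) negative at the end of that range, so F has a first zero u\<^sub>* < 0
  with F > 0 on (u\<^sub>*, 0) and f u\<^sub>* > 0. The homoclinic orbit is the energy level
  u'\<^sup>2 = 2 F u between u\<^sub>* and 0. To avoid the square-root singularity at the turning
  point, write u = u\<^sub>* + v\<^sup>2: energy conservation becomes the regular equation
  v' = G v, G\<^sup>2 = F (u\<^sub>* + v\<^sup>2) / (2 v\<^sup>2), on (-c, c) with c\<^sup>2 = -u\<^sub>*. Since G vanishes only
  linearly at \<plusminus>c, the solution takes infinite time to reach \<plusminus>c, so v runs from -c to c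
  over the whole line and u tends to 0 at both ends. Smoothness follows by bootstrapping.
*)

theory Submission
  imports Defs
begin

section \<open>Finite-order smoothness\<close>

definition iter_differentiable :: "nat \<Rightarrow> (real \<Rightarrow> real) \<Rightarrow> bool" where
  "iter_differentiable n \<phi> \<longleftrightarrow>
     (\<forall>k<n. \<forall>x. ((deriv^^k) \<phi> has_real_derivative (deriv^^(Suc k)) \<phi> x) (at x))"

lemma iter_differentiable_0 [simp]: "iter_differentiable 0 \<phi>"
  by (simp add: iter_differentiable_def)

lemma iter_differentiable_Suc:
  "iter_differentiable (Suc n) \<phi> \<longleftrightarrow>
     (\<forall>x. (\<phi> has_real_derivative deriv \<phi> x) (at x)) \<and> iter_differentiable n (deriv \<phi>)"
proof -
  have shift: "(deriv^^(Suc k)) \<phi> = (deriv^^k) (deriv \<phi>)" for k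
    by (simp add: funpow_Suc_right del: funpow.simps)
  have "(\<forall>k<Suc n. P k) \<longleftrightarrow> P 0 \<and> (\<forall>k<n. P (Suc k))" for P
    by (metis less_Suc_eq_0_disj not_less_eq)
  then show ?thesis
    unfolding iter_differentiable_def by (simp only: shift funpow_0)
qed

lemma iter_differentiable_SucD: "iter_differentiable (Suc n) \<phi> \<Longrightarrow> iter_differentiable n \<phi>"
  by (simp add: iter_differentiable_def)

lemma smooth_real_if_iter_differentiable:
  "(\<And>n. iter_differentiable n \<phi>) \<Longrightarrow> smooth_real \<phi>"
  unfolding smooth_real_def smooth_deriv_seq_def
  by (rule exI[of _ "\<lambda>k. (deriv^^k) \<phi>"]) (auto simp: iter_differentiable_def)

lemma iter_differentiable_add:
  "iter_differentiable n f \<Longrightarrow> iter_differentiable n g \<Longrightarrow> iter_differentiable n (\<lambda>x. f x + g x)"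
proof (induction n arbitrary: f g)
  case (Suc n)
  have d: "((\<lambda>x. f x + g x) has_real_derivative deriv f x + deriv g x) (at x)" for x
    using Suc.prems by (intro DERIV_add) (auto simp: iter_differentiable_Suc)
  then have "deriv (\<lambda>x. f x + g x) = (\<lambda>x. deriv f x + deriv g x)"
    by (auto intro!: ext DERIV_imp_deriv)
  then show ?case using Suc d by (simp add: iter_differentiable_Suc)
qed simp

lemma iter_differentiable_const: "iter_differentiable n (\<lambda>x. c)"
proof (induction n arbitrary: c)
  case (Suc n)
  have "deriv (\<lambda>x. c) = (\<lambda>x. 0)" by (auto intro!: ext DERIV_imp_deriv)
  then show ?case using Suc by (simp add: iter_differentiable_Suc)
qed simp

lemma iter_differentiable_mult:
  "iter_differentiable n f \<Longrightarrow> iter_differentiable n g \<Longrightarrow> iter_differentiable n (\<lambda>x. f x * g x)"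
proof (induction n arbitrary: f g)
  case (Suc n)
  have "(f has_real_derivative deriv f x) (at x)" "(g has_real_derivative deriv g x) (at x)" for x
    using Suc.prems by (auto simp: iter_differentiable_Suc)
  then have d: "((\<lambda>x. f x * g x) has_real_derivative deriv f x * g x + f x * deriv g x) (at x)" for x
    by (auto intro!: derivative_eq_intros)
  then have "deriv (\<lambda>x. f x * g x) = (\<lambda>x. deriv f x * g x + f x * deriv g x)"
    by (intro ext DERIV_imp_deriv)
  moreover have "iter_differentiable n (\<lambda>x. deriv f x * g x + f x * deriv g x)"
    using Suc.prems iter_differentiable_SucD[OF Suc.prems(1)] iter_differentiable_SucD[OF Suc.prems(2)]
    by (intro iter_differentiable_add Suc.IH) (auto simp: iter_differentiable_Suc)
  ultimately show ?case using d by (simp add: iter_differentiable_Suc)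
qed simp

definition has_derivs_on :: "real set \<Rightarrow> (nat \<Rightarrow> real \<Rightarrow> real) \<Rightarrow> bool" where
  "has_derivs_on S D \<longleftrightarrow> (\<forall>k. \<forall>x\<in>S. (D k has_real_derivative D (Suc k) x) (at x))"

lemma iter_differentiable_compose:
  assumes "has_derivs_on S D" and "\<And>x. u x \<in> S" and "iter_differentiable n u"
  shows "iter_differentiable n (\<lambda>x. D 0 (u x))"
  using assms
proof (induction n arbitrary: D)
  case (Suc n)
  have du: "(u has_real_derivative deriv u x) (at x)" for x
    using Suc.prems(3) by (simp add: iter_differentiable_Suc)
  have d: "((\<lambda>x. D 0 (u x)) has_real_derivative D 1 (u x) * deriv u x) (at x)" for x
    using Suc.prems(1,2) by (intro DERIV_chain2[OF _ du]) (simp add: has_derivs_on_def)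
  then have "deriv (\<lambda>x. D 0 (u x)) = (\<lambda>x. D 1 (u x) * deriv u x)"
    by (intro ext DERIV_imp_deriv)
  moreover have "has_derivs_on S (\<lambda>k. D (Suc k))"
    using Suc.prems(1) by (simp add: has_derivs_on_def)
  then have "iter_differentiable n (\<lambda>x. D 1 (u x) * deriv u x)"
    using Suc.prems(2,3) Suc.IH[of "\<lambda>k. D (Suc k)"] iter_differentiable_SucD
    by (intro iter_differentiable_mult) (auto simp: iter_differentiable_Suc)
  ultimately show ?case using d by (simp add: iter_differentiable_Suc)
qed simp

lemma has_derivs_on_powr:
  fixes a r :: real
  shows "has_derivs_on {x. x > -a} (\<lambda>k x. (\<Prod>i<k. (r - real i)) * (x + a) powr (r - real k))"
  unfolding has_derivs_on_def
proof (intro allI ballI)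
  fix k x assume "x \<in> {x. x > -a}"
  then have "((\<lambda>x. (\<Prod>i<k. (r - real i)) * (x + a) powr (r - real k)) has_real_derivative
      (\<Prod>i<k. (r - real i)) * ((r - real k) * (x + a) powr (r - real k - 1))) (at x)"
    by (auto intro!: derivative_eq_intros)
  then show "((\<lambda>x. (\<Prod>i<k. (r - real i)) * (x + a) powr (r - real k)) has_real_derivative
      (\<Prod>i<Suc k. (r - real i)) * (x + a) powr (r - real (Suc k))) (at x)"
    by (simp add: algebra_simps diff_diff_eq)
qed

lemma iter_differentiable_second_order_ode:
  assumes du: "\<And>x. (u has_real_derivative u' x) (at x)"
    and du': "\<And>x. (u' has_real_derivative h x) (at x)"
    and bootstrap: "\<And>n. iter_differentiable n u \<Longrightarrow> iter_differentiable n h"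
  shows "iter_differentiable n u"
proof -
  have "deriv u = u'" "deriv u' = h"
    using du du' by (auto intro!: ext DERIV_imp_deriv)
  then have "iter_differentiable n u \<and> iter_differentiable (Suc n) u"
    using du du' bootstrap by (induction n) (simp_all add: iter_differentiable_Suc)
  then show ?thesis by simp
qed

lemma DERIV_zero_if_quadratic_bound:
  fixes P :: "real \<Rightarrow> real"
  assumes d: "d > 0" and b: "\<And>v. \<bar>v\<bar> < d \<Longrightarrow> \<bar>P v - P 0\<bar> \<le> C * v\<^sup>2"
  shows "(P has_real_derivative 0) (at 0)"
  unfolding DERIV_def
proof (rule Lim_null_comparison)
  have B: "norm ((P (0 + h) - P 0) / h) \<le> \<bar>C\<bar> * \<bar>h\<bar>" if h: "h \<noteq> 0" "dist h 0 < d" for h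
  proof -
    have "\<bar>P h - P 0\<bar> \<le> C * h\<^sup>2" using b h by simp
    also have "\<dots> \<le> \<bar>C\<bar> * \<bar>h\<bar> * \<bar>h\<bar>" by (simp add: power2_eq_square abs_mult[symmetric])
    finally have "\<bar>P h - P 0\<bar> \<le> \<bar>C\<bar> * \<bar>h\<bar> * \<bar>h\<bar>" .
    thus ?thesis
      using h by (simp add: divide_le_eq abs_divide)
  qed
  show "\<forall>\<^sub>F h in at 0. norm ((P (0 + h) - P 0) / h) \<le> \<bar>C\<bar> * \<bar>h\<bar>"
    unfolding eventually_at using B d by blast
  show "((\<lambda>h. \<bar>C\<bar> * \<bar>h\<bar>) \<longlongrightarrow> 0) (at 0)"
    by (rule tendsto_eq_intros | simp)+
qed

lemma abs_increment_le_quadratic: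
  fixes g g' :: "real \<Rightarrow> real"
  assumes "0 \<le> t"
    and deriv: "\<And>x. 0 \<le> x \<Longrightarrow> x \<le> t \<Longrightarrow> (g has_real_derivative g' x) (at x)"
    and bound: "\<And>x. 0 \<le> x \<Longrightarrow> x \<le> t \<Longrightarrow> \<bar>g' x\<bar> \<le> M * x"
  shows "\<bar>g t - g 0\<bar> \<le> M / 2 * t\<^sup>2"
proof -
  have "(\<lambda>x. g x - M / 2 * x\<^sup>2) t \<le> (\<lambda>x. g x - M / 2 * x\<^sup>2) 0"
  proof (rule DERIV_nonpos_imp_nonincreasing[OF \<open>0 \<le> t\<close>])
    fix x assume x: "0 \<le> x" "x \<le> t"
    have "((\<lambda>x. g x - M / 2 * x\<^sup>2) has_real_derivative g' x - M * x) (at x)"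
      using deriv[OF x] by (auto intro!: derivative_eq_intros)
    moreover have "g' x - M * x \<le> 0" using bound[OF x] by linarith
    ultimately show "\<exists>y. ((\<lambda>x. g x - M / 2 * x\<^sup>2) has_real_derivative y) (at x) \<and> y \<le> 0" by blast
  qed
  moreover have "(\<lambda>x. g x + M / 2 * x\<^sup>2) 0 \<le> (\<lambda>x. g x + M / 2 * x\<^sup>2) t"
  proof (rule DERIV_nonneg_imp_nondecreasing[OF \<open>0 \<le> t\<close>])
    fix x assume x: "0 \<le> x" "x \<le> t"
    have "((\<lambda>x. g x + M / 2 * x\<^sup>2) has_real_derivative g' x + M * x) (at x)"
      using deriv[OF x] by (auto intro!: derivative_eq_intros)
    moreover have "g' x + M * x \<ge> 0" using bound[OF x] by linarith
    ultimately show "\<exists>y. ((\<lambda>x. g x + M / 2 * x\<^sup>2) has_real_derivative y) (at x) \<and> y \<ge> 0" by blast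
  qed
  ultimately show ?thesis unfolding abs_le_iff by simp
qed

section \<open>Convex potentials with a saddle at the origin\<close>

locale convex_potential =
  fixes a :: real and F f f' :: "real \<Rightarrow> real"
  assumes a_pos: "a > 0"
    and F_deriv: "\<And>u. u > -a \<Longrightarrow> (F has_real_derivative f u) (at u)"
    and f_deriv: "\<And>u. u > -a \<Longrightarrow> (f has_real_derivative f' u) (at u)"
    and f'_strict_mono: "\<And>x y. -a < x \<Longrightarrow> x < y \<Longrightarrow> f' x < f' y"
    and F_0: "F 0 = 0" and f_0: "f 0 = 0" and f'_0_pos: "f' 0 > 0"
begin

lemma f'_mono: "-a < x \<Longrightarrow> x \<le> y \<Longrightarrow> f' x \<le> f' y"
  using f'_strict_mono[of x y] by (cases "x = y") auto

lemma F_le_quadratic: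
  assumes u: "-a < u" "u \<le> 0"
  shows "F u \<le> f' 0 / 2 * u\<^sup>2"
proof -
  have fl: "f x \<ge> f' 0 * x" if x: "u \<le> x" "x \<le> 0" for x
  proof -
    have "(\<lambda>x. f x - f' 0 * x) x \<ge> (\<lambda>x. f x - f' 0 * x) 0"
    proof (rule DERIV_nonpos_imp_nonincreasing[OF x(2)])
      fix y assume y: "x \<le> y" "y \<le> 0"
      have "((\<lambda>x. f x - f' 0 * x) has_real_derivative f' y - f' 0) (at y)"
        using f_deriv[of y] y x u by (auto intro!: derivative_eq_intros)
      moreover have "f' y \<le> f' 0" using f'_mono[of y 0] y x u by simp
      ultimately show "\<exists>z. ((\<lambda>x. f x - f' 0 * x) has_real_derivative z) (at y) \<and> z \<le> 0"
        by (intro exI[of _ "f' y - f' 0"]) simp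
    qed
    thus ?thesis using f_0 by simp
  qed
  have "(\<lambda>x. F x - f' 0 / 2 * x\<^sup>2) u \<le> (\<lambda>x. F x - f' 0 / 2 * x\<^sup>2) 0"
  proof (rule DERIV_nonneg_imp_nondecreasing[OF u(2)])
    fix y assume y: "u \<le> y" "y \<le> 0"
    have "((\<lambda>x. F x - f' 0 / 2 * x\<^sup>2) has_real_derivative f y - f' 0 * y) (at y)"
      using F_deriv[of y] y u by (auto intro!: derivative_eq_intros)
    moreover have "f y - f' 0 * y \<ge> 0" using fl[OF y] by simp
    ultimately show "\<exists>z. ((\<lambda>x. F x - f' 0 / 2 * x\<^sup>2) has_real_derivative z) (at y) \<and> z \<ge> 0" by blast
  qed
  thus ?thesis using F_0 by simp
qed

lemma f_slope_less:
  assumes "-a < x" "x < y" "y < z"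
  shows "(f y - f x) / (y - x) < (f z - f y) / (z - y)"
proof -
  obtain \<xi> where \<xi>: "x < \<xi>" "\<xi> < y" "f y - f x = (y - x) * f' \<xi>"
    using MVT2[of x y f f'] assms f_deriv by force
  obtain \<zeta> where \<zeta>: "y < \<zeta>" "\<zeta> < z" "f z - f y = (z - y) * f' \<zeta>"
    using MVT2[of y z f f'] assms f_deriv by force
  have "f' \<xi> < f' \<zeta>" using f'_strict_mono \<xi> \<zeta> assms by simp
  then show ?thesis using \<xi> \<zeta> assms by simp
qed

lemma f_neg_between_zeros:
  assumes "-a < x" "x < y" "y < z" "f x = 0" "f z = 0"
  shows "f y < 0"
proof -
  have "f y / (y - x) < - f y / (z - y)" using f_slope_less[of x y z] assms by simp
  then have "(z - x) * f y < 0" using assms by (simp add: field_simps)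
  then show ?thesis using assms by (simp add: mult_less_0_iff)
qed

lemma f_pos_left_of_zeros:
  assumes "-a < x" "x < y" "y < z" "f y = 0" "f z = 0"
  shows "f x > 0"
  using f_slope_less[of x y z] assms by (simp add: zero_less_divide_iff)

text \<open>If \<open>f \<le> 0\<close> on \<open>(-a, 0)\<close>, then \<open>F (-a) \<ge> F 0 = 0\<close>; and \<open>f < 0\<close> just left
  of \<open>0\<close>.\<close>
lemma f_zero_left_of_0:
  assumes F_cont: "continuous_on {-a..0} F" and F_neg: "F (-a) < 0"
  obtains z0 where "-a < z0" "z0 < 0" "f z0 = 0"
proof -
  have "(f has_real_derivative f' 0) (at 0)" using f_deriv a_pos by simp
  then obtain d where d: "d > 0" "\<And>h. h > 0 \<Longrightarrow> h < d \<Longrightarrow> f (0 - h) < f 0"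
    using DERIV_pos_inc_left f'_0_pos by blast
  define e where "e = min d a / 2"
  have e: "0 < e" "e < d" "e < a" using d a_pos by (auto simp: e_def)
  have f_neg_near_0: "f x < 0" if "-e \<le> x" "x < 0" for x
    using d(2)[of "-x"] that e f_0 by simp
  have "\<exists>x1. -a < x1 \<and> x1 < 0 \<and> f x1 > 0"
  proof (rule ccontr)
    assume no_pos: "\<not> ?thesis"
    have "\<exists>y. (F has_real_derivative y) (at x) \<and> y \<le> 0" if "-a < x" "x < 0" for x
    proof (intro exI conjI)
      show "(F has_real_derivative f x) (at x)" using F_deriv that by simp
      show "f x \<le> 0" using no_pos that by (meson not_less)
    qed
    then have "F (-a) \<ge> F 0"
      using F_cont a_pos by (intro DERIV_nonpos_imp_decreasing_open[of "-a" 0 F]) auto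
    then show False using F_neg F_0 by simp
  qed
  then obtain x1 where x1: "-a < x1" "x1 < 0" "f x1 > 0" by blast
  have "x1 < -e"
  proof (rule ccontr)
    assume "\<not> x1 < -e"
    then show False using f_neg_near_0[of x1] x1 by simp
  qed
  moreover have "continuous_on {x1..-e} f"
    using x1 by (intro continuous_at_imp_continuous_on ballI DERIV_isCont[OF f_deriv]) auto
  ultimately obtain z0 where z0: "x1 \<le> z0" "z0 \<le> -e" "f z0 = 0"
    using IVT2'[of f "-e" 0 x1] f_neg_near_0[of "-e"] x1 e by auto
  then show thesis using x1 e by (intro that[of z0]) auto
qed

text \<open>The turning point \<open>u\<^sub>*\<close> is the first zero of \<open>F\<close> to the left of the saddle \<open>0\<close>;
  it lies beyond the zero \<open>z\<^sub>0\<close> of the convex force \<open>f\<close>, so \<open>f u\<^sub>* > 0\<close>.\<close>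
lemma turning_point_exists:
  assumes F_cont: "continuous_on {-a..0} F" and F_neg: "F (-a) < 0"
  obtains us where "-a < us" "us < 0" "F us = 0" "f us > 0"
    and "\<And>u. us < u \<Longrightarrow> u < 0 \<Longrightarrow> F u > 0"
proof -
  have F_cont_on: "continuous_on {x..y} F" if "-a \<le> x" "y \<le> 0" for x y
    using continuous_on_subset[OF F_cont] that by auto
  obtain z0 where z0_in: "-a < z0" "z0 < 0" and z0: "f z0 = 0"
    using f_zero_left_of_0[OF F_cont F_neg] by blast
  have f_pos: "f u > 0" if "-a < u" "u < z0" for u
    using f_pos_left_of_zeros[of u z0 0] that z0_in z0 f_0 by simp
  have f_neg: "f u < 0" if "z0 < u" "u < 0" for u
    using f_neg_between_zeros[of z0 u 0] that z0_in z0 f_0 by simp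
  have F_incr: "F x < F y" if "-a \<le> x" "x < y" "y \<le> z0" for x y
  proof (rule DERIV_pos_imp_increasing_open[of x y F])
    show "\<exists>l. (F has_real_derivative l) (at t) \<and> l > 0" if "x < t" "t < y" for t
      using that \<open>-a \<le> x\<close> \<open>y \<le> z0\<close> F_deriv f_pos by (meson le_less_trans less_le_trans)
  qed (use that z0_in F_cont_on[of x y] in auto)
  have F_decr: "F x > F 0" if "z0 \<le> x" "x < 0" for x
  proof (rule DERIV_neg_imp_decreasing_open[of x 0 F])
    show "\<exists>l. (F has_real_derivative l) (at t) \<and> l < 0" if "x < t" "t < 0" for t
      using that \<open>z0 \<le> x\<close> z0_in F_deriv f_neg by (meson le_less_trans less_trans)
  qed (use that z0_in F_cont_on[of x 0] in auto)
  obtain us where us: "-a \<le> us" "us \<le> z0" "F us = 0"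
    using IVT'[of F "-a" 0 z0] F_neg F_decr[of z0] F_0 z0_in F_cont_on[of "-a" z0] by auto
  have "us \<noteq> -a" "us \<noteq> z0" using us F_neg F_decr[of z0] F_0 z0_in by auto
  with us have us_in: "-a < us" "us < z0" by auto
  show thesis
  proof
    show "F u > 0" if "us < u" "u < 0" for u
      using F_incr[of us u] F_decr[of u] us F_0 that by (cases "u \<le> z0") auto
  qed (use us_in z0_in us f_pos in auto)
qed

end

section \<open>The homoclinic orbit\<close>

locale homoclinic_potential = convex_potential +
  fixes us :: real
  assumes us_gt: "-a < us" and us_lt: "us < 0" and F_us: "F us = 0" and f_us_pos: "f us > 0"
    and F_pos: "\<And>u. us < u \<Longrightarrow> u < 0 \<Longrightarrow> F u > 0"
begin

definition L where "L = \<bar>f' us\<bar> + \<bar>f' 0\<bar>"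

lemma f'_bounded: "us \<le> x \<Longrightarrow> x \<le> 0 \<Longrightarrow> \<bar>f' x\<bar> \<le> L"
  using f'_mono[of us x] f'_mono[of x 0] us_gt unfolding L_def by auto

lemma F_deriv_shift: "-a < us + t \<Longrightarrow> ((\<lambda>t. F (us + t)) has_real_derivative f (us + t)) (at t)"
  using DERIV_shift[of F "f (us + t)" t us] F_deriv[of "us + t"] by (simp add: add.commute)

lemma f_deriv_shift: "-a < us + t \<Longrightarrow> ((\<lambda>t. f (us + t)) has_real_derivative f' (us + t)) (at t)"
  using DERIV_shift[of f "f' (us + t)" t us] f_deriv[of "us + t"] by (simp add: add.commute)

lemma f_lipschitz_at_us:
  assumes t: "0 \<le> t" "t \<le> -us"
  shows "\<bar>f (us + t) - f us\<bar> \<le> L * t"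
proof (cases "t = 0")
  case False
  hence "0 < t" using t by simp
  then obtain z where z: "0 < z" "z < t" "f (us + t) - f (us + 0) = (t - 0) * f' (us + z)"
    using MVT2[of 0 t "\<lambda>t. f (us + t)" "\<lambda>t. f' (us + t)"] f_deriv_shift us_gt t by force
  have "\<bar>f' (us + z)\<bar> \<le> L" using f'_bounded[of "us + z"] z t by simp
  thus ?thesis using z t by (simp add: abs_mult mult.commute mult_left_mono)
qed simp

lemma F_taylor_at_us:
  assumes "0 \<le> t" "t \<le> -us"
  shows "\<bar>F (us + t) - f us * t\<bar> \<le> L / 2 * t\<^sup>2"
proof -
  have "\<bar>(F (us + t) - f us * t) - (F (us + 0) - f us * 0)\<bar> \<le> L / 2 * t\<^sup>2"
  proof (rule abs_increment_le_quadratic[where g = "\<lambda>t. F (us + t) - f us * t"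
        and g' = "\<lambda>x. f (us + x) - f us"])
    fix x assume x: "0 \<le> x" "x \<le> t"
    show "((\<lambda>t. F (us + t) - f us * t) has_real_derivative f (us + x) - f us) (at x)"
      using F_deriv_shift[of x] x us_gt by (auto intro!: derivative_eq_intros)
    show "\<bar>f (us + x) - f us\<bar> \<le> L * x" using f_lipschitz_at_us x assms by simp
  qed (use assms in simp)
  then show ?thesis using F_us by simp
qed

definition c where "c = sqrt (-us)"

lemma c_pos: "c > 0"
  using us_lt by (simp add: c_def)

lemma c_sq: "c\<^sup>2 = -us"
  using us_lt by (simp add: c_def)

lemma sq_less_minus_us: "\<bar>v\<bar> < c \<Longrightarrow> v\<^sup>2 < -us"
proof -
  assume "\<bar>v\<bar> < c"
  hence "\<bar>v\<bar>\<^sup>2 < c\<^sup>2" by (intro power_strict_mono) auto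
  thus ?thesis using c_sq by simp
qed

text \<open>\<open>speed v\<close> is \<open>v'\<close> along the orbit \<open>u = us + v\<^sup>2\<close>; the singularity at \<open>v = 0\<close> is
  removable because \<open>F us = 0\<close> and \<open>F' us = f us\<close>.\<close>
definition speed_sq where "speed_sq v = (if v = 0 then f us / 2 else F (us + v\<^sup>2) / (2 * v\<^sup>2))"
definition speed_sq' where "speed_sq' v = (if v = 0 then 0 else f (us + v\<^sup>2) / v - F (us + v\<^sup>2) / v ^ 3)"

lemma speed_sq_pos:
  assumes "\<bar>v\<bar> < c"
  shows "speed_sq v > 0"
proof (cases "v = 0")
  case True thus ?thesis using f_us_pos by (simp add: speed_sq_def)
next
  case False
  have "F (us + v\<^sup>2) > 0" using F_pos[of "us + v\<^sup>2"] sq_less_minus_us[OF assms] False by simp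
  thus ?thesis using False by (simp add: speed_sq_def)
qed

lemma speed_sq_eq: "2 * speed_sq v + v * speed_sq' v = f (us + v\<^sup>2)"
  by (cases "v = 0") (auto simp: speed_sq_def speed_sq'_def field_simps power2_eq_square power3_eq_cube)

lemma speed_sq_deriv_0: "(speed_sq has_real_derivative 0) (at 0)"
proof (rule DERIV_zero_if_quadratic_bound[OF c_pos])
  fix x :: real assume x: "\<bar>x\<bar> < c"
  show "\<bar>speed_sq x - speed_sq 0\<bar> \<le> L / 4 * x\<^sup>2"
  proof (cases "x = 0")
    case False
    have t: "\<bar>F (us + x\<^sup>2) - f us * x\<^sup>2\<bar> \<le> L / 2 * (x\<^sup>2)\<^sup>2"
      using F_taylor_at_us[of "x\<^sup>2"] sq_less_minus_us[OF x] by simp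
    have "speed_sq x - speed_sq 0 = (F (us + x\<^sup>2) - f us * x\<^sup>2) / (2 * x\<^sup>2)"
      using False by (simp add: speed_sq_def field_simps)
    hence "\<bar>speed_sq x - speed_sq 0\<bar> = \<bar>F (us + x\<^sup>2) - f us * x\<^sup>2\<bar> / (2 * x\<^sup>2)"
      by (simp add: abs_divide)
    also have "\<dots> \<le> (L / 2 * (x\<^sup>2)\<^sup>2) / (2 * x\<^sup>2)"
      using t False by (intro divide_right_mono) auto
    also have "\<dots> = L / 4 * x\<^sup>2" using False by (simp add: field_simps power2_eq_square)
    finally show ?thesis .
  qed (simp add: speed_sq_def)
qed

lemma speed_sq_deriv: "(speed_sq has_real_derivative speed_sq' v) (at v)"
proof (cases "v = 0")
  case True
  then show ?thesis using speed_sq_deriv_0 by (simp add: speed_sq'_def)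
next
  case False
  have dA: "((\<lambda>v. F (us + v\<^sup>2)) has_real_derivative f (us + v\<^sup>2) * (2 * v)) (at v)"
  proof (rule DERIV_chain2[of F])
    have "-a < us + v\<^sup>2" using us_gt zero_le_power2[of v] by linarith
    thus "(F has_real_derivative f (us + v\<^sup>2)) (at (us + v\<^sup>2))" by (rule F_deriv)
    show "((\<lambda>v. us + v\<^sup>2) has_real_derivative 2 * v) (at v)"
      by (auto intro!: derivative_eq_intros)
  qed
  have dB: "((\<lambda>v. 2 * v\<^sup>2) has_real_derivative 2 * (2 * v)) (at v)"
    by (auto intro!: derivative_eq_intros)
  have dQ: "((\<lambda>v. F (us + v\<^sup>2) / (2 * v\<^sup>2)) has_real_derivative
      (f (us + v\<^sup>2) * (2 * v) * (2 * v\<^sup>2) - F (us + v\<^sup>2) * (2 * (2 * v))) / (2 * v\<^sup>2 * (2 * v\<^sup>2))) (at v)"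
    using DERIV_divide[OF dA dB] False by simp
  have eq: "(f (us + v\<^sup>2) * (2 * v) * (2 * v\<^sup>2) - F (us + v\<^sup>2) * (2 * (2 * v)))
      / (2 * v\<^sup>2 * (2 * v\<^sup>2)) = speed_sq' v"
    using False by (simp add: speed_sq'_def field_simps power2_eq_square power3_eq_cube)
  show ?thesis
  proof (rule has_field_derivative_transform_within_open[of _ _ v "UNIV - {0}"])
    show "((\<lambda>v. F (us + v\<^sup>2) / (2 * v\<^sup>2)) has_real_derivative speed_sq' v) (at v)" using dQ eq by simp
  qed (auto simp: speed_sq_def False)
qed

definition speed where "speed v = sqrt (speed_sq v)"

lemma speed_pos: "\<bar>v\<bar> < c \<Longrightarrow> speed v > 0"
  using speed_sq_pos by (simp add: speed_def)

lemma speed_squared: "\<bar>v\<bar> < c \<Longrightarrow> speed v * speed v = speed_sq v"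
  using speed_sq_pos[of v] by (simp add: speed_def)

lemma speed_deriv:
  assumes v: "\<bar>v\<bar> < c"
  shows "(speed has_real_derivative speed_sq' v / (2 * speed v)) (at v)"
proof -
  have "((\<lambda>v. sqrt (speed_sq v)) has_real_derivative inverse (sqrt (speed_sq v)) / 2 * speed_sq' v) (at v)"
    by (rule DERIV_chain2[OF DERIV_real_sqrt[OF speed_sq_pos[OF v]] speed_sq_deriv])
  thus ?thesis by (simp add: speed_def[abs_def] speed_def field_simps)
qed

lemma speed_sq_upper:
  assumes v: "c / 2 \<le> \<bar>v\<bar>" "\<bar>v\<bar> < c"
  shows "speed_sq v \<le> 4 * f' 0 * (c - \<bar>v\<bar>)\<^sup>2"
proof -
  define w where "w = \<bar>v\<bar>"
  have w: "c / 2 \<le> w" "w < c" "w > 0" using v c_pos by (auto simp: w_def)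
  have v0: "v \<noteq> 0" using w w_def by auto
  have vw: "v\<^sup>2 = w\<^sup>2" by (simp add: w_def)
  have u: "us + v\<^sup>2 = -((c - w) * (c + w))" using c_sq vw by (simp add: algebra_simps power2_eq_square)
  have Fu: "F (us + v\<^sup>2) \<le> f' 0 / 2 * ((c - w) * (c + w))\<^sup>2"
  proof -
    have h: "-a < us + v\<^sup>2" using us_gt zero_le_power2[of v] by linarith
    have "us + v\<^sup>2 \<le> 0" using sq_less_minus_us[OF v(2)] by simp
    from F_le_quadratic[OF h this] show ?thesis unfolding u by simp
  qed
  have "speed_sq v = F (us + v\<^sup>2) / (2 * w\<^sup>2)" using v0 vw by (simp add: speed_sq_def)
  also have "\<dots> \<le> (f' 0 / 2 * ((c - w) * (c + w))\<^sup>2) / (2 * w\<^sup>2)"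
    using Fu w by (intro divide_right_mono) auto
  also have "\<dots> \<le> 4 * f' 0 * (c - w)\<^sup>2"
  proof -
    have "(c + w)\<^sup>2 \<le> (4 * w)\<^sup>2" using w by (intro power_mono) auto
    hence "f' 0 * (c - w)\<^sup>2 * (c + w)\<^sup>2 \<le> f' 0 * (c - w)\<^sup>2 * (16 * w\<^sup>2)"
      using f'_0_pos by (intro mult_left_mono) (auto simp: power2_eq_square)
    have "(f' 0 / 2 * ((c - w) * (c + w))\<^sup>2) / (2 * w\<^sup>2) = f' 0 * (c - w)\<^sup>2 * (c + w)\<^sup>2 / (4 * w\<^sup>2)"
      by (simp only: power_mult_distrib)
    also have "\<dots> \<le> f' 0 * (c - w)\<^sup>2 * (16 * w\<^sup>2) / (4 * w\<^sup>2)"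
      by (rule divide_right_mono[OF \<open>f' 0 * (c - w)\<^sup>2 * (c + w)\<^sup>2 \<le> f' 0 * (c - w)\<^sup>2 * (16 * w\<^sup>2)\<close>]) simp
    also have "\<dots> = 4 * f' 0 * (c - w)\<^sup>2" using w by (simp add: field_simps)
    finally show ?thesis .
  qed
  finally show ?thesis by (simp add: w_def)
qed

lemma speed_upper:
  assumes v: "c / 2 \<le> \<bar>v\<bar>" "\<bar>v\<bar> < c"
  shows "speed v \<le> 2 * sqrt (f' 0) * (c - \<bar>v\<bar>)"
proof -
  have "speed v \<le> sqrt (4 * f' 0 * (c - \<bar>v\<bar>)\<^sup>2)" unfolding speed_def using speed_sq_upper[OF v] by simp
  also have "\<dots> = 2 * sqrt (f' 0) * (c - \<bar>v\<bar>)" using v f'_0_pos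
    by (simp add: real_sqrt_mult)
  finally show ?thesis .
qed

definition inv_speed where "inv_speed v = 1 / speed v"

lemma speed_isCont: "\<bar>v\<bar> < c \<Longrightarrow> isCont speed v"
  using speed_deriv DERIV_isCont by blast

lemma inv_speed_continuous_on:
  assumes b: "b < c"
  shows "continuous_on {-b..b} inv_speed"
proof -
  have "continuous_on {-b..b} speed"
    by (rule continuous_at_imp_continuous_on) (use speed_isCont b in auto)
  moreover have "\<forall>x\<in>{-b..b}. speed x \<noteq> 0"
  proof
    fix x assume "x \<in> {-b..b}"
    hence "\<bar>x\<bar> < c" using b by auto
    thus "speed x \<noteq> 0" using speed_pos[of x] by simp
  qed
  ultimately show ?thesis unfolding inv_speed_def[abs_def]
    by (intro continuous_on_divide continuous_on_const) auto
qed

definition travel_time where "travel_time v = integral {0..v} inv_speed - integral {v..0} inv_speed"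

lemma travel_time_eq_integral:
  assumes b: "0 \<le> b" "b < c" and v: "-b \<le> v" "v \<le> b"
  shows "travel_time v = integral {-b..v} inv_speed - integral {-b..0} inv_speed"
proof -
  have int: "inv_speed integrable_on {-b..b}" by (rule integrable_continuous_interval[OF inv_speed_continuous_on[OF b(2)]])
  show ?thesis
  proof (cases "v \<ge> 0")
    case True
    have "integral {v..0} inv_speed = 0"
    proof (cases "v = 0")
      case False hence "{v..0} = {}" using True by auto
      thus ?thesis by simp
    qed simp
    moreover have "integral {-b..0} inv_speed + integral {0..v} inv_speed = integral {-b..v} inv_speed"
      by (rule Henstock_Kurzweil_Integration.integral_combine)
        (use True b v in \<open>auto intro: integrable_subinterval_real[OF int]\<close>)
    ultimately show ?thesis unfolding travel_time_def by simp
  next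
    case False
    have "{0..v} = {}" using False by auto
    hence "integral {0..v} inv_speed = 0" by simp
    moreover have "integral {-b..v} inv_speed + integral {v..0} inv_speed = integral {-b..0} inv_speed"
      by (rule Henstock_Kurzweil_Integration.integral_combine)
        (use False b v in \<open>auto intro: integrable_subinterval_real[OF int]\<close>)
    ultimately show ?thesis unfolding travel_time_def by simp
  qed
qed

lemma travel_time_deriv:
  assumes v: "\<bar>v\<bar> < c"
  shows "(travel_time has_real_derivative inv_speed v) (at v)"
proof -
  define b where "b = (\<bar>v\<bar> + c) / 2"
  have b1: "0 \<le> b" using v unfolding b_def by simp
  have b2: "b < c" using v unfolding b_def by simp
  have "(\<bar>v\<bar> + c) / 2 > \<bar>v\<bar>" using v by simp
  hence b3: "-b < v" using abs_ge_minus_self[of v] unfolding b_def by linarith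
  have b4: "v < b" using \<open>(\<bar>v\<bar> + c) / 2 > \<bar>v\<bar>\<close> abs_ge_self[of v] unfolding b_def by linarith
  note b = b1 b2 b3 b4
  have "((\<lambda>x. integral {-b..x} inv_speed) has_real_derivative inv_speed v) (at v within {-b..b})"
    by (rule integral_has_real_derivative[OF inv_speed_continuous_on[OF b(2)]]) (use b in auto)
  moreover have "at v within {-b..b} = at v"
    by (rule at_within_interior) (use b in auto)
  ultimately have "((\<lambda>x. integral {-b..x} inv_speed) has_real_derivative inv_speed v) (at v)" by simp
  hence d: "((\<lambda>x. integral {-b..x} inv_speed - integral {-b..0} inv_speed) has_real_derivative inv_speed v) (at v)"
    using DERIV_diff[OF _ DERIV_const] by fastforce
  show ?thesis
  proof (rule has_field_derivative_transform_within_open[OF d, of "{-b<..<b}"])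
    fix x assume "x \<in> {-b<..<b}"
    thus "integral {-b..x} inv_speed - integral {-b..0} inv_speed = travel_time x" using travel_time_eq_integral[of b x] b by auto
  qed (use b in auto)
qed

lemma inv_speed_pos: "\<bar>v\<bar> < c \<Longrightarrow> inv_speed v > 0"
  using speed_pos by (simp add: inv_speed_def)

lemma travel_time_strict_mono:
  assumes "\<bar>x\<bar> < c" "\<bar>y\<bar> < c" "x < y"
  shows "travel_time x < travel_time y"
proof (rule DERIV_pos_imp_increasing[OF assms(3)])
  fix t assume "x \<le> t" "t \<le> y"
  hence t: "\<bar>t\<bar> < c" using assms by auto
  show "\<exists>l. (travel_time has_real_derivative l) (at t) \<and> l > 0"
    using travel_time_deriv[OF t] inv_speed_pos[OF t] by blast
qed

lemma travel_time_0: "travel_time 0 = 0"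
  by (simp add: travel_time_def)

definition K where "K = 2 * sqrt (f' 0)"
lemma K_pos: "K > 0"
  using f'_0_pos by (simp add: K_def)


lemma travel_time_lower:
  assumes v: "c / 2 \<le> v" "v < c"
  shows "travel_time v \<ge> travel_time (c / 2) + (ln (c / 2) - ln (c - v)) / K"
proof -
  have "(\<lambda>x. travel_time x + ln (c - x) / K) (c / 2) \<le> (\<lambda>x. travel_time x + ln (c - x) / K) v"
  proof (rule DERIV_nonneg_imp_nondecreasing[OF v(1)])
    fix x assume x: "c / 2 \<le> x" "x \<le> v"
    hence xa: "\<bar>x\<bar> < c" "c / 2 \<le> \<bar>x\<bar>" "x < c" "\<bar>x\<bar> = x" using v c_pos by auto
    have l: "((\<lambda>x. ln (c - x)) has_real_derivative (- 1 / (c - x))) (at x)"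
      using xa by (auto intro!: derivative_eq_intros simp: field_simps)
    have "((\<lambda>x. travel_time x + ln (c - x) / K) has_real_derivative inv_speed x + (- 1 / (c - x)) / K) (at x)"
      by (rule DERIV_add[OF travel_time_deriv[OF xa(1)] DERIV_cdivide[OF l]])
    moreover have "inv_speed x - 1 / (K * (c - x)) \<ge> 0"
    proof -
      have "speed x \<le> K * (c - x)" using speed_upper[OF xa(2,1)] xa by (simp add: K_def)
      hence "1 / (K * (c - x)) \<le> 1 / speed x"
        using speed_pos[OF xa(1)] by (intro divide_left_mono) auto
      thus ?thesis by (simp add: inv_speed_def)
    qed
    ultimately show "\<exists>y. ((\<lambda>x. travel_time x + ln (c - x) / K) has_real_derivative y) (at x) \<and> y \<ge> 0"
      by (intro exI[of _ "inv_speed x + (- 1 / (c - x)) / K"]) (auto simp: field_simps)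
  qed
  thus ?thesis unfolding diff_divide_distrib by simp
qed

lemma travel_time_upper:
  assumes v: "-c < v" "v \<le> -c / 2"
  shows "travel_time v \<le> travel_time (-c / 2) - (ln (c / 2) - ln (c + v)) / K"
proof -
  have "(\<lambda>x. travel_time x - ln (c + x) / K) v \<le> (\<lambda>x. travel_time x - ln (c + x) / K) (-c / 2)"
  proof (rule DERIV_nonneg_imp_nondecreasing[OF v(2)])
    fix x assume x: "v \<le> x" "x \<le> -c / 2"
    hence xa: "\<bar>x\<bar> < c" "c / 2 \<le> \<bar>x\<bar>" "-c < x" "\<bar>x\<bar> = -x" "c + x > 0" using v c_pos by auto
    have l: "((\<lambda>x. ln (c + x)) has_real_derivative (1 / (c + x))) (at x)"
      using xa by (auto intro!: derivative_eq_intros simp: field_simps)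
    have "((\<lambda>x. travel_time x - ln (c + x) / K) has_real_derivative inv_speed x - (1 / (c + x)) / K) (at x)"
      by (rule DERIV_diff[OF travel_time_deriv[OF xa(1)] DERIV_cdivide[OF l]])
    moreover have "inv_speed x - 1 / (K * (c + x)) \<ge> 0"
    proof -
      have "speed x \<le> K * (c + x)" using speed_upper[OF xa(2,1)] xa by (simp add: K_def)
      hence "1 / (K * (c + x)) \<le> 1 / speed x"
        using speed_pos[OF xa(1)] by (intro divide_left_mono) auto
      thus ?thesis by (simp add: inv_speed_def)
    qed
    ultimately show "\<exists>y. ((\<lambda>x. travel_time x - ln (c + x) / K) has_real_derivative y) (at x) \<and> y \<ge> 0"
      by (intro exI[of _ "inv_speed x - (1 / (c + x)) / K"]) (auto simp: field_simps)
  qed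
  moreover have "c + - c / 2 = c / 2" by simp
  ultimately show ?thesis unfolding diff_divide_distrib by simp
qed

lemma travel_time_continuous_on:
  assumes "-c < x" "y < c"
  shows "continuous_on {x..y} travel_time"
proof (rule continuous_at_imp_continuous_on, rule ballI)
  fix t assume "t \<in> {x..y}"
  hence "\<bar>t\<bar> < c" using assms by (auto simp: abs_less_iff)
  thus "isCont travel_time t" by (rule DERIV_isCont[OF travel_time_deriv])
qed

lemma travel_time_unbounded_above:
  obtains v where "0 \<le> v" "v < c" "y \<le> travel_time v"
proof -
  define m where "m = max 0 (y - travel_time (c / 2))"
  define v where "v = c - (c / 2) * exp (- K * m)"
  have "exp (- K * m) \<le> 1" using K_pos by (simp add: m_def)
  then have v: "c / 2 \<le> v" "v < c" using c_pos by (auto simp: v_def field_simps)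
  have "c - v = (c / 2) * exp (- K * m)" by (simp add: v_def)
  then have "ln (c - v) = ln (c / 2) + ln (exp (- K * m))"
    by (simp only:) (rule ln_mult_pos, use c_pos in auto)
  then have "travel_time (c / 2) + m \<le> travel_time v"
    using travel_time_lower[OF v] K_pos by simp
  then show thesis using v c_pos by (intro that[of v]) (auto simp: m_def)
qed

lemma travel_time_unbounded_below:
  obtains v where "-c < v" "v \<le> 0" "travel_time v \<le> y"
proof -
  define m where "m = max 0 (travel_time (- c / 2) - y)"
  define v where "v = - c + (c / 2) * exp (- K * m)"
  have "exp (- K * m) \<le> 1" using K_pos by (simp add: m_def)
  then have v: "-c < v" "v \<le> - c / 2" using c_pos by (auto simp: v_def field_simps)
  have "c + v = (c / 2) * exp (- K * m)" by (simp add: v_def)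
  then have "ln (c + v) = ln (c / 2) + ln (exp (- K * m))"
    by (simp only:) (rule ln_mult_pos, use c_pos in auto)
  then have "travel_time v \<le> travel_time (- c / 2) - m"
    using travel_time_upper[OF v] K_pos by simp
  then show thesis using v c_pos by (intro that[of v]) (auto simp: m_def)
qed

lemma travel_time_surj: "\<exists>v. \<bar>v\<bar> < c \<and> travel_time v = y"
proof (cases "y \<ge> 0")
  case True
  obtain v1 where v1: "0 \<le> v1" "v1 < c" "y \<le> travel_time v1"
    by (rule travel_time_unbounded_above)
  then obtain v where "0 \<le> v" "v \<le> v1" "travel_time v = y"
    using IVT'[of travel_time 0 y v1] travel_time_0 True travel_time_continuous_on[of 0 v1] c_pos
    by auto
  then show ?thesis using v1 by (intro exI[of _ v]) auto
next
  case False
  obtain v1 where v1: "-c < v1" "v1 \<le> 0" "travel_time v1 \<le> y"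
    by (rule travel_time_unbounded_below)
  then obtain v where "v1 \<le> v" "v \<le> 0" "travel_time v = y"
    using IVT'[of travel_time v1 y 0] travel_time_0 False travel_time_continuous_on[of v1 0] c_pos
    by auto
  then show ?thesis using v1 by (intro exI[of _ v]) auto
qed

lemma travel_time_inj:
  "\<bar>x\<bar> < c \<Longrightarrow> \<bar>y\<bar> < c \<Longrightarrow> travel_time x = travel_time y \<Longrightarrow> x = y"
  using travel_time_strict_mono[of x y] travel_time_strict_mono[of y x] by (cases x y rule: linorder_cases) auto

definition position where "position y = (THE v. \<bar>v\<bar> < c \<and> travel_time v = y)"

lemma abs_position_less: "\<bar>position y\<bar> < c" and travel_time_position: "travel_time (position y) = y"
proof -
  have "\<exists>!v. \<bar>v\<bar> < c \<and> travel_time v = y" using travel_time_surj travel_time_inj by blast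
  then have "\<bar>position y\<bar> < c \<and> travel_time (position y) = y"
    unfolding position_def by (rule theI')
  then show "\<bar>position y\<bar> < c" "travel_time (position y) = y" by auto
qed

lemma position_travel_time: "\<bar>v\<bar> < c \<Longrightarrow> position (travel_time v) = v"
  using abs_position_less[of "travel_time v"] travel_time_position[of "travel_time v"] travel_time_inj by blast

lemma position_isCont: "isCont position y"
proof -
  define x where "x = position y"
  have x: "\<bar>x\<bar> < c" using abs_position_less by (simp add: x_def)
  define d where "d = (c - \<bar>x\<bar>) / 2"
  have d: "d > 0" using x by (simp add: d_def)
  have near_x: "\<bar>z\<bar> < c" if "\<bar>z - x\<bar> \<le> d" for z
  proof -
    have "\<bar>z\<bar> \<le> \<bar>z - x\<bar> + \<bar>x\<bar>" using abs_triangle_ineq[of "z - x" x] by simp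
    then show ?thesis using that x unfolding d_def by argo
  qed
  have "isCont position (travel_time x)"
    by (rule isCont_inverse_function[OF d]) (auto intro: position_travel_time DERIV_isCont travel_time_deriv near_x)
  thus ?thesis using travel_time_position by (simp add: x_def)
qed

lemma position_deriv: "(position has_real_derivative speed (position y)) (at y)"
proof -
  have x: "\<bar>position y\<bar> < c" using abs_position_less by simp
  have "(position has_real_derivative inverse (inv_speed (position y))) (at y)"
    by (rule DERIV_inverse_function[OF travel_time_deriv[OF x] _ _ _ _ position_isCont, of "y - 1" "y + 1"])
      (use inv_speed_pos[OF x] travel_time_position in auto)
  thus ?thesis by (simp add: inv_speed_def)
qed

lemma position_ge:
  assumes "\<bar>a'\<bar> < c" "y \<ge> travel_time a'"
  shows "position y \<ge> a'"
  using travel_time_strict_mono[of "position y" a'] abs_position_less[of y] travel_time_position[of y]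
    assms by force

lemma position_le:
  assumes "\<bar>a'\<bar> < c" "y \<le> travel_time a'"
  shows "position y \<le> a'"
  using travel_time_strict_mono[of a' "position y"] abs_position_less[of y] travel_time_position[of y]
    assms by force

lemma position_at_top: "(position \<longlongrightarrow> c) at_top"
proof (rule order_tendstoI)
  fix a assume a: "a < c"
  define a' where "a' = (max a 0 + c) / 2"
  have a': "\<bar>a'\<bar> < c" "a < a'" using a c_pos by (auto simp: a'_def)
  show "\<forall>\<^sub>F x in at_top. a < position x"
    unfolding eventually_at_top_linorder
    using position_ge[OF a'(1)] a'(2) by (intro exI[of _ "travel_time a'"]) (auto intro: less_le_trans)
next
  fix a assume "c < a"
  have "position x < a" for x using abs_position_less[of x] \<open>c < a\<close> by (simp add: abs_less_iff)
  thus "\<forall>\<^sub>F x in at_top. position x < a" by (intro always_eventually) auto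
qed

lemma position_at_bot: "(position \<longlongrightarrow> -c) at_bot"
proof (rule order_tendstoI)
  fix a assume a: "a < -c"
  have "a < position x" for x using abs_position_less[of x] a by (simp add: abs_less_iff)
  thus "\<forall>\<^sub>F x in at_bot. a < position x" by (intro always_eventually) auto
next
  fix a assume a: "-c < a"
  define a' where "a' = (min a 0 - c) / 2"
  have a': "\<bar>a'\<bar> < c" "a' < a" using a c_pos by (auto simp: a'_def)
  show "\<forall>\<^sub>F x in at_bot. position x < a"
    unfolding eventually_at_bot_linorder
    using position_le[OF a'(1)] a'(2) by (intro exI[of _ "travel_time a'"]) (auto intro: le_less_trans)
qed

definition orbit where "orbit z = us + (position z)\<^sup>2"
definition orbit' where "orbit' z = 2 * position z * speed (position z)"

lemma orbit_deriv: "(orbit has_real_derivative orbit' z) (at z)"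
proof -
  have "((\<lambda>z. us + (position z)\<^sup>2) has_real_derivative 2 * position z * speed (position z)) (at z)"
    using position_deriv[of z] by (auto intro!: derivative_eq_intros)
  thus ?thesis unfolding orbit_def[abs_def] orbit'_def by simp
qed

lemma orbit'_deriv: "(orbit' has_real_derivative f (orbit z)) (at z)"
proof -
  define v where "v = position z"
  have v: "\<bar>v\<bar> < c" using abs_position_less by (simp add: v_def)
  have d_speed: "((\<lambda>z. speed (position z)) has_real_derivative
      speed_sq' v / (2 * speed v) * speed v) (at z)"
    unfolding v_def by (rule DERIV_chain2[OF speed_deriv[OF v[unfolded v_def]] position_deriv])
  have "(orbit' has_real_derivative
      2 * speed v * speed v + 2 * v * (speed_sq' v / (2 * speed v) * speed v)) (at z)"
    using DERIV_mult[OF DERIV_cmult[OF position_deriv, of 2] d_speed]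
    unfolding orbit'_def[abs_def] v_def[symmetric] by (simp add: algebra_simps)
  moreover have "2 * speed v * speed v + 2 * v * (speed_sq' v / (2 * speed v) * speed v)
      = 2 * speed_sq v + v * speed_sq' v"
    using speed_squared[OF v] speed_pos[OF v] by (simp add: field_simps)
  moreover have "\<dots> = f (orbit z)" using speed_sq_eq by (simp add: orbit_def v_def)
  ultimately show ?thesis by simp
qed

lemma orbit_range: "us \<le> orbit z \<and> orbit z < 0"
proof -
  have "(position z)\<^sup>2 < -us" using sq_less_minus_us abs_position_less by blast
  thus ?thesis by (simp add: orbit_def)
qed

lemma orbit_at_top: "(orbit \<longlongrightarrow> 0) at_top"
proof -
  have "((\<lambda>z. us + (position z)\<^sup>2) \<longlongrightarrow> us + c\<^sup>2) at_top" by (intro tendsto_intros position_at_top)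
  thus ?thesis using c_sq by (simp add: orbit_def[abs_def])
qed

lemma orbit_at_bot: "(orbit \<longlongrightarrow> 0) at_bot"
proof -
  have "((\<lambda>z. us + (position z)\<^sup>2) \<longlongrightarrow> us + (-c)\<^sup>2) at_bot" by (intro tendsto_intros position_at_bot)
  thus ?thesis using c_sq by (simp add: orbit_def[abs_def])
qed

end

section \<open>Traveling waves\<close>

locale traveling_wave =
  fixes \<beta> \<nu> \<kappa> \<gamma> \<eta>inf s :: real
  assumes \<beta>_pos: "\<beta> > 0" and \<nu>_gt: "\<nu> > -1" and \<kappa>_pos: "\<kappa> > 0" and \<gamma>_eq: "\<gamma> = \<beta> / (\<nu> + 2)"
    and \<eta>inf_pos: "\<eta>inf > 0"
    and s_sq_lower: "\<beta> * (\<nu> + 1) / (2 * (\<nu> + 2) * \<eta>inf powr (\<nu> + 3)) < s\<^sup>2"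
    and s_sq_upper: "s\<^sup>2 < \<beta> / \<eta>inf powr (\<nu> + 3)"
begin

text \<open>The unknown is \<open>u = s w = \<eta>\<^sup>-\<^sup>p - a\<close> with \<open>p = \<nu> + 2\<close>, \<open>a = \<eta>inf\<^sup>-\<^sup>p\<close>; the second
  equation, multiplied by \<open>s\<close>, becomes the Newtonian equation \<open>u'' = force u\<close>.\<close>
definition p where "p = \<nu> + 2"
definition a where "a = \<eta>inf powr (-p)"
definition q where "q = 1 - 1 / p"
definition force where
  "force u = (\<gamma> * u + s\<^sup>2 * ((u + a) powr (-1 / p) - \<eta>inf)) / \<kappa>"
definition force' where
  "force' u = (\<gamma> + s\<^sup>2 * ((-1 / p) * (u + a) powr (-1 / p - 1))) / \<kappa>"
definition potential where
  "potential u = (\<gamma> * u\<^sup>2 / 2 + s\<^sup>2 * (((u + a) powr q - a powr q) / q - \<eta>inf * u)) / \<kappa>"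

lemma p_gt_1: "p > 1"
  using \<nu>_gt by (simp add: p_def)

lemma a_pos: "a > 0"
  using \<eta>inf_pos by (simp add: a_def)

lemma a_powr: "a powr (-1 / p) = \<eta>inf"
  using p_gt_1 \<eta>inf_pos by (simp add: a_def powr_powr)

lemma s_sq_pos: "s\<^sup>2 > 0"
proof -
  have "\<beta> * (\<nu> + 1) / (2 * (\<nu> + 2) * \<eta>inf powr (\<nu> + 3)) > 0"
    using \<beta>_pos \<nu>_gt \<eta>inf_pos by simp
  then show ?thesis using s_sq_lower by linarith
qed

lemma potential_deriv: "u > -a \<Longrightarrow> (potential has_real_derivative force u) (at u)"
proof -
  assume "u > -a"
  moreover have "q > 0" "q - 1 = -1 / p" using p_gt_1 by (auto simp: q_def field_simps)
  ultimately show ?thesis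
    unfolding potential_def[abs_def] force_def using \<kappa>_pos
    by (auto intro!: derivative_eq_intros)
qed

lemma force_deriv: "u > -a \<Longrightarrow> (force has_real_derivative force' u) (at u)"
  unfolding force_def[abs_def] force'_def using \<kappa>_pos
  by (auto intro!: derivative_eq_intros)

lemma force'_strict_mono:
  assumes "-a < x" "x < y"
  shows "force' x < force' y"
proof -
  have "(y + a) powr (-1 / p - 1) < (x + a) powr (-1 / p - 1)"
    by (rule powr_less_mono2_neg) (use assms p_gt_1 in \<open>auto simp: field_simps\<close>)
  then have "(-1 / p) * (x + a) powr (-1 / p - 1) < (-1 / p) * (y + a) powr (-1 / p - 1)"
    using p_gt_1 by (intro mult_strict_left_mono_neg) auto
  then have "s\<^sup>2 * ((-1 / p) * (x + a) powr (-1 / p - 1)) < s\<^sup>2 * ((-1 / p) * (y + a) powr (-1 / p - 1))"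
    using s_sq_pos by (rule mult_strict_left_mono)
  then show ?thesis
    using \<kappa>_pos by (simp add: force'_def divide_strict_right_mono)
qed

lemma force'_0_pos: "force' 0 > 0"
proof -
  have "-p * (-1 / p - 1) = p + 1" using p_gt_1 by (simp add: field_simps)
  then have "a powr (-1 / p - 1) = \<eta>inf powr (p + 1)"
    by (simp only: a_def powr_powr)
  moreover have "s\<^sup>2 * \<eta>inf powr (p + 1) < \<beta>"
    using s_sq_upper \<eta>inf_pos by (simp add: p_def field_simps add.commute)
  ultimately have "s\<^sup>2 * ((1 / p) * a powr (-1 / p - 1)) < \<gamma>"
    using p_gt_1 by (simp add: \<gamma>_eq p_def[symmetric] field_simps)
  then show ?thesis using \<kappa>_pos by (simp add: force'_def)
qed

lemma potential_continuous_on: "continuous_on {-a..0} potential"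
proof -
  have "continuous_on {-a..0} (\<lambda>u. (u + a) powr q)"
    using p_gt_1 by (intro continuous_on_powr') (auto simp: q_def intro!: continuous_intros)
  then show ?thesis
    unfolding potential_def[abs_def] using \<kappa>_pos p_gt_1
    by (intro continuous_on_divide continuous_on_add continuous_on_mult continuous_on_diff
        continuous_on_const continuous_on_id continuous_on_power) (auto simp: q_def)
qed

text \<open>The end \<open>u = -a\<close> of the domain corresponds to \<open>\<eta> = \<infinity>\<close>.\<close>
lemma potential_at_minus_a_neg: "potential (-a) < 0"
proof -
  define E where "E = \<eta>inf powr (p + 1)"
  have E: "E > 0" using \<eta>inf_pos by (simp add: E_def)
  have "a / \<eta>inf = 1 / E" using \<eta>inf_pos by (simp add: a_def E_def powr_add powr_minus field_simps)
  then have aE: "a = \<eta>inf / E" using \<eta>inf_pos E by (simp add: field_simps)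
  have aq: "a powr q = a * \<eta>inf"
    using a_pos a_powr by (simp add: q_def powr_diff powr_minus_divide field_simps)
  have "\<eta>inf powr (\<nu> + 3) = E" unfolding E_def p_def by (simp add: add.assoc)
  then have "\<beta> * (p - 1) / (2 * p * E) < s\<^sup>2" using s_sq_lower by (simp add: p_def add.commute)
  then have h: "\<beta> * (p - 1) < s\<^sup>2 * (2 * p * E)" using E p_gt_1 by (simp add: divide_less_eq)
  have pos: "\<eta>inf\<^sup>2 / (2 * p * (p - 1) * E\<^sup>2) > 0" using E p_gt_1 \<eta>inf_pos by simp
  have lhs: "\<gamma> * a\<^sup>2 / 2 = (\<beta> * (p - 1)) * (\<eta>inf\<^sup>2 / (2 * p * (p - 1) * E\<^sup>2))"
    using p_gt_1 E by (simp add: \<gamma>_eq p_def[symmetric] aE field_simps power2_eq_square)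
  have rhs: "s\<^sup>2 * a * \<eta>inf / (p - 1) = (s\<^sup>2 * (2 * p * E)) * (\<eta>inf\<^sup>2 / (2 * p * (p - 1) * E\<^sup>2))"
    using p_gt_1 E by (simp add: aE field_simps power2_eq_square)
  have q: "q = (p - 1) / p" "q \<noteq> 0" using p_gt_1 by (auto simp: q_def field_simps)
  have "potential (-a) = (\<gamma> * a\<^sup>2 / 2 + s\<^sup>2 * ((0 - a * \<eta>inf) / q - \<eta>inf * (-a))) / \<kappa>"
    using q(2) by (simp add: potential_def aq)
  also have "\<dots> = (\<gamma> * a\<^sup>2 / 2 - s\<^sup>2 * a * \<eta>inf / (p - 1)) / \<kappa>"
    using p_gt_1 by (simp add: q field_simps)
  finally have "potential (-a) = (\<gamma> * a\<^sup>2 / 2 - s\<^sup>2 * a * \<eta>inf / (p - 1)) / \<kappa>" .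
  moreover have "\<gamma> * a\<^sup>2 / 2 < s\<^sup>2 * a * \<eta>inf / (p - 1)"
    unfolding lhs rhs by (rule mult_strict_right_mono[OF h pos])
  ultimately show ?thesis using \<kappa>_pos by (simp add: divide_neg_pos)
qed

sublocale convex_potential a potential force force'
  using a_pos potential_deriv force_deriv force'_strict_mono force'_0_pos a_powr
  by unfold_locales (auto simp: potential_def force_def)

lemma homoclinic_solution:
  obtains u u' :: "real \<Rightarrow> real"
  where "\<And>z. -a < u z" "\<And>z. u z < 0"
    and "\<And>z. (u has_real_derivative u' z) (at z)"
    and "\<And>z. (u' has_real_derivative force (u z)) (at z)"
    and "(u \<longlongrightarrow> 0) at_top" "(u \<longlongrightarrow> 0) at_bot"
proof -
  obtain us where us: "-a < us" "us < 0" "potential us = 0" "force us > 0"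
    and "\<And>u. us < u \<Longrightarrow> u < 0 \<Longrightarrow> potential u > 0"
    using turning_point_exists[OF potential_continuous_on potential_at_minus_a_neg] by blast
  then interpret H: homoclinic_potential a potential force force' us
    by unfold_locales auto
  show thesis
  proof (rule that)
    show "-a < H.orbit z" for z using H.orbit_range[of z] us by linarith
  qed (use H.orbit_range H.orbit_deriv H.orbit'_deriv H.orbit_at_top H.orbit_at_bot in auto)
qed

definition eta_of where "eta_of u = (u + a) powr (-1 / p)"

lemma eta_of_gt:
  assumes "-a < u" "u < 0"
  shows "eta_of u > \<eta>inf"
proof -
  have "a powr (-1 / p) < (u + a) powr (-1 / p)"
    by (rule powr_less_mono2_neg) (use p_gt_1 assms in auto)
  then show ?thesis using a_powr by (simp add: eta_of_def)
qed

lemma eta_of_powr: "-a < u \<Longrightarrow> eta_of u powr (-(\<nu> + 2)) = u + a"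
  using p_gt_1 by (simp add: eta_of_def powr_powr p_def[symmetric])

lemma \<eta>inf_powr: "\<eta>inf powr (-(\<nu> + 2)) = a"
  by (simp add: a_def p_def)

lemma tendsto_eta_of:
  assumes "(u \<longlongrightarrow> 0) F"
  shows "((\<lambda>z. eta_of (u z)) \<longlongrightarrow> \<eta>inf) F"
proof -
  have "((\<lambda>z. (u z + a) powr (-1 / p)) \<longlongrightarrow> (0 + a) powr (-1 / p)) F"
    by (intro tendsto_intros assms) (use a_pos in auto)
  then show ?thesis using a_powr by (simp add: eta_of_def)
qed

lemma iter_differentiable_eta_of:
  "(\<And>z. -a < u z) \<Longrightarrow> iter_differentiable n u \<Longrightarrow> iter_differentiable n (\<lambda>z. eta_of (u z))"
  using iter_differentiable_compose[OF has_derivs_on_powr[of a "-1 / p"], of u n]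
  by (simp add: eta_of_def add.commute)

lemma force_eq: "force u = (\<gamma> * u + s\<^sup>2 * (eta_of u - \<eta>inf)) / \<kappa>"
  by (simp add: force_def eta_of_def)

lemma solution_iter_differentiable:
  assumes u_gt: "\<And>z. -a < u z"
    and du: "\<And>z. (u has_real_derivative u' z) (at z)"
    and du': "\<And>z. (u' has_real_derivative force (u z)) (at z)"
  shows "iter_differentiable n u"
proof (rule iter_differentiable_second_order_ode[OF du du'])
  fix n assume "iter_differentiable n u"
  then have "iter_differentiable n
      (\<lambda>z. (\<gamma> / \<kappa>) * u z + ((s\<^sup>2 / \<kappa>) * eta_of (u z) + (- (s\<^sup>2 * \<eta>inf / \<kappa>))))"
    using u_gt by (intro iter_differentiable_add iter_differentiable_mult iter_differentiable_const
        iter_differentiable_eta_of)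
  moreover have "(\<lambda>z. force (u z)) =
      (\<lambda>z. (\<gamma> / \<kappa>) * u z + ((s\<^sup>2 / \<kappa>) * eta_of (u z) + (- (s\<^sup>2 * \<eta>inf / \<kappa>))))"
    by (simp add: force_eq diff_divide_distrib add_divide_distrib algebra_simps)
  ultimately show "iter_differentiable n (\<lambda>z. force (u z))" by simp
qed

lemma traveling_wave_exists:
  "\<exists>w \<eta> :: real \<Rightarrow> real.
     smooth_real w \<and> smooth_real \<eta> \<and>
     (\<forall>z. \<eta> z > 0) \<and>
     \<not> (\<exists>c. \<forall>z. \<eta> z = c) \<and>
     (\<forall>z. s * w z + \<eta>inf powr (-(\<nu> + 2)) - \<eta> z powr (-(\<nu> + 2)) = 0) \<and>
     (\<forall>z. \<gamma> * w z - \<kappa> * deriv (deriv w) z + s * (\<eta> z - \<eta>inf) = 0) \<and>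
     (\<eta> \<longlongrightarrow> \<eta>inf) at_top \<and> (\<eta> \<longlongrightarrow> \<eta>inf) at_bot \<and>
     (w \<longlongrightarrow> 0) at_top \<and> (w \<longlongrightarrow> 0) at_bot \<and>
     (\<forall>z. \<eta> z > \<eta>inf)"
proof -
  obtain u u' :: "real \<Rightarrow> real" where u_gt: "\<And>z. -a < u z" and u_neg: "\<And>z. u z < 0"
    and du: "\<And>z. (u has_real_derivative u' z) (at z)"
    and du': "\<And>z. (u' has_real_derivative force (u z)) (at z)"
    and u_top: "(u \<longlongrightarrow> 0) at_top" and u_bot: "(u \<longlongrightarrow> 0) at_bot"
    using homoclinic_solution by metis
  have u_smooth: "iter_differentiable n u" for n
    using u_gt du du' by (rule solution_iter_differentiable)
  have s_ne: "s \<noteq> 0" using s_sq_pos by auto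
  define w where "w z = u z / s" for z
  define \<eta> where "\<eta> z = eta_of (u z)" for z
  have w_smooth: "smooth_real w"
    using u_smooth iter_differentiable_mult[OF iter_differentiable_const, of _ u "1 / s"]
    by (intro smooth_real_if_iter_differentiable) (simp add: w_def[abs_def])
  have \<eta>_smooth: "smooth_real \<eta>"
    using iter_differentiable_eta_of[OF u_gt u_smooth]
    by (intro smooth_real_if_iter_differentiable) (simp add: \<eta>_def[abs_def])
  have \<eta>_gt: "\<eta> z > \<eta>inf" for z
    using eta_of_gt u_gt u_neg by (simp add: \<eta>_def)
  have ddw: "deriv (deriv w) z = force (u z) / s" for z
  proof -
    have "deriv w = (\<lambda>z. u' z / s)"
      unfolding w_def[abs_def] by (intro ext DERIV_imp_deriv DERIV_cdivide du)
    then show ?thesis by (auto intro!: DERIV_imp_deriv DERIV_cdivide du')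
  qed
  have \<eta>_lim: "(\<eta> \<longlongrightarrow> \<eta>inf) F" if "(u \<longlongrightarrow> 0) F" for F
    using tendsto_eta_of[OF that] by (simp add: \<eta>_def[abs_def])
  have w_lim: "(w \<longlongrightarrow> 0) F" if "(u \<longlongrightarrow> 0) F" for F
    using tendsto_divide[OF that tendsto_const[of s]] s_ne by (simp add: w_def[abs_def])
  have nonconstant: "\<not> (\<exists>c. \<forall>z. \<eta> z = c)"
    using \<eta>_gt \<eta>_lim[OF u_top] tendsto_const_iff
    by (metis (no_types, lifting) ext less_irrefl trivial_limit_at_top_linorder)
  have \<eta>_pos: "\<eta> z > 0" for z
    using \<eta>inf_pos \<eta>_gt less_trans by blast
  have first_eq: "s * w z + \<eta>inf powr (-(\<nu> + 2)) - \<eta> z powr (-(\<nu> + 2)) = 0" for z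
    using eta_of_powr[OF u_gt[of z]] \<eta>inf_powr s_ne by (simp add: w_def \<eta>_def)
  have second_eq: "\<gamma> * w z - \<kappa> * deriv (deriv w) z + s * (\<eta> z - \<eta>inf) = 0" for z
    using s_ne \<kappa>_pos by (simp add: ddw force_eq w_def \<eta>_def field_simps power2_eq_square)
  show ?thesis
    by (rule exI[of _ w], rule exI[of _ \<eta>])
      (intro conjI allI w_smooth \<eta>_smooth \<eta>_pos nonconstant first_eq second_eq
        \<eta>_lim w_lim u_top u_bot \<eta>_gt)
qed

end

theorem mainTheorem1:
  fixes \<beta> \<nu> \<kappa> \<gamma> \<eta>inf s :: real
  assumes "\<beta> > 0" and "\<nu> > -1" and "\<kappa> > 0" and "\<gamma> = \<beta> / (\<nu> + 2)" and "\<eta>inf > 0"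
    and "\<beta> * (\<nu> + 1) / (2 * (\<nu> + 2) * \<eta>inf powr (\<nu> + 3)) < s\<^sup>2"
    and "s\<^sup>2 < \<beta> / \<eta>inf powr (\<nu> + 3)"
  shows "\<exists>w \<eta> :: real \<Rightarrow> real.
           smooth_real w \<and> smooth_real \<eta> \<and>
           (\<forall>z. \<eta> z > 0) \<and>
           \<not> (\<exists>c. \<forall>z. \<eta> z = c) \<and>
           (\<forall>z. s * w z + \<eta>inf powr (-(\<nu> + 2)) - \<eta> z powr (-(\<nu> + 2)) = 0) \<and>
           (\<forall>z. \<gamma> * w z - \<kappa> * deriv (deriv w) z + s * (\<eta> z - \<eta>inf) = 0) \<and>
           (\<eta> \<longlongrightarrow> \<eta>inf) at_top \<and> (\<eta> \<longlongrightarrow> \<eta>inf) at_bot \<and>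
           (w \<longlongrightarrow> 0) at_top \<and> (w \<longlongrightarrow> 0) at_bot \<and>
           (\<forall>z. \<eta> z > \<eta>inf)"
proof -
  interpret traveling_wave \<beta> \<nu> \<kappa> \<gamma> \<eta>inf s
    using assms by unfold_locales
  show ?thesis by (rule traveling_wave_exists)
qed

end
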